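(* Let $G_1,G_2$ be locally compact groups and $M_1,M_2$ locally compact topological spaces. Suppose $G_j$ acts properly on $M_j$ for $j=1,2$, and $G_2$ also acts (not necessarily properly) on $M_1$, commuting with the action of $G_1$. Then the action of $G_1\times G_2$ on $M_1\times M_2$ given by $(g_1,g_2)\cdot(m_1,m_2)=(g_1g_2m_1,g_2m_2)$ is proper.
   Context: An action of a topological group $H$ on a topological space $X$ is proper if for every compact $K\subseteq X$ the set $\{h\in H: hK\cap K\neq\emptyset\}$ is compact. *)

theory Defs
  imports "HOL-Analysis.Analysis" "HOL-Algebra.Group"
begin

definition topological_group :: "'a monoid \<Rightarrow> 'a topology \<Rightarrow> bool" where
  "topological_group G T \<longleftrightarrow>
     group G \<and> topspace T = carrier G \<and>
     continuous_map (prod_topology T T) T (\<lambda>(x, y). x \<otimes>\<^bsub>G\<^esub> y) \<and>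
     continuous_map T T (\<lambda>x. inv\<^bsub>G\<^esub> x)"

text \<open>Locally compact (Hausdorff, as is the standard convention).\<close>
definition lc_space :: "'a topology \<Rightarrow> bool" where
  "lc_space X \<longleftrightarrow> Hausdorff_space X \<and> locally_compact_space X"

definition continuous_action ::
  "'a monoid \<Rightarrow> 'a topology \<Rightarrow> 'm topology \<Rightarrow> ('a \<Rightarrow> 'm \<Rightarrow> 'm) \<Rightarrow> bool" where
  "continuous_action G T X act \<longleftrightarrow>
     topological_group G T \<and>
     (\<forall>g\<in>carrier G. \<forall>x\<in>topspace X. act g x \<in> topspace X) \<and>
     (\<forall>x\<in>topspace X. act \<one>\<^bsub>G\<^esub> x = x) \<and>
     (\<forall>g\<in>carrier G. \<forall>h\<in>carrier G. \<forall>x\<in>topspace X.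
        act (g \<otimes>\<^bsub>G\<^esub> h) x = act g (act h x)) \<and>
     continuous_map (prod_topology T X) X (\<lambda>(g, x). act g x)"

definition proper_action ::
  "'a monoid \<Rightarrow> 'a topology \<Rightarrow> 'm topology \<Rightarrow> ('a \<Rightarrow> 'm \<Rightarrow> 'm) \<Rightarrow> bool" where
  "proper_action G T X act \<longleftrightarrow>
     continuous_action G T X act \<and>
     (\<forall>K. compactin X K \<longrightarrow>
        compactin T {h \<in> carrier G. act h ` K \<inter> K \<noteq> {}})"

end

theory Submission
  imports Defs
begin

text \<open>If \<open>(g\<^sub>1, g\<^sub>2)\<close> maps a point \<open>(m\<^sub>1, m\<^sub>2)\<close> of a compact set \<open>K\<close> into \<open>K\<close>, then \<open>g\<^sub>2\<close>
maps \<open>m\<^sub>2 \<in> K\<^sub>2 = snd ` K\<close> into \<open>K\<^sub>2\<close>, so \<open>g\<^sub>2\<close> lies in the transporter \<open>C\<^sub>2\<close> of \<open>K\<^sub>2\<close>,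
which is compact by properness of the \<open>G\<^sub>2\<close>-action. Hence \<open>g\<^sub>2 m\<^sub>1\<close> lies in the compact set
\<open>L = C\<^sub>2 K\<^sub>1\<close>, where \<open>K\<^sub>1 = fst ` K\<close>, and \<open>g\<^sub>1\<close> maps it into \<open>K\<^sub>1\<close>; so \<open>g\<^sub>1\<close> lies in the
compact transporter \<open>C\<^sub>1\<close> of \<open>K\<^sub>1 \<union> L\<close>. The transporter of \<open>K\<close> is therefore contained in
\<open>C\<^sub>1 \<times> C\<^sub>2\<close>, and as the projection of a closed subset of \<open>(C\<^sub>1 \<times> C\<^sub>2) \<times> K\<close> it is compact.\<close>

definition transporter :: "'a monoid \<Rightarrow> ('a \<Rightarrow> 'm \<Rightarrow> 'm) \<Rightarrow> 'm set \<Rightarrow> 'a set" where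
  "transporter G act K = {g \<in> carrier G. act g ` K \<inter> K \<noteq> {}}"

lemma compactin_transporter:
  "proper_action G T X act \<Longrightarrow> compactin X K \<Longrightarrow> compactin T (transporter G act K)"
  by (simp add: proper_action_def transporter_def)

lemma continuous_map_case_prod_comp:
  assumes "continuous_map (prod_topology X Y) Z (\<lambda>(x, y). h x y)"
    and "continuous_map W X f" and "continuous_map W Y g"
  shows "continuous_map W Z (\<lambda>w. h (f w) (g w))"
  using continuous_map_compose[OF continuous_map_pairedI[OF assms(2,3)] assms(1)]
  by (simp add: o_def)

lemmas continuous_map_double_projections =
  continuous_map_fst_of[OF continuous_map_fst, unfolded o_def]
  continuous_map_fst_of[OF continuous_map_snd, unfolded o_def]
  continuous_map_snd_of[OF continuous_map_fst, unfolded o_def]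
  continuous_map_snd_of[OF continuous_map_snd, unfolded o_def]

lemma topological_group_DirProd:
  assumes G: "topological_group G T" and H: "topological_group H U"
  shows "topological_group (G \<times>\<times> H) (prod_topology T U)"
proof -
  have mult_eq: "(\<lambda>(x, y). x \<otimes>\<^bsub>G \<times>\<times> H\<^esub> y) =
      (\<lambda>z. (fst (fst z) \<otimes>\<^bsub>G\<^esub> fst (snd z), snd (fst z) \<otimes>\<^bsub>H\<^esub> snd (snd z)))"
    by (auto simp: fun_eq_iff mult_DirProd')
  have inv: "continuous_map (prod_topology T U) (prod_topology T U)
      (\<lambda>z. (inv\<^bsub>G\<^esub> fst z, inv\<^bsub>H\<^esub> snd z))"
    using G H continuous_map_compose[OF continuous_map_fst] continuous_map_compose[OF continuous_map_snd]
    unfolding topological_group_def by (simp add: continuous_map_paired o_def) blast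
  show ?thesis
    unfolding topological_group_def mult_eq
  proof (intro conjI)
    show "group (G \<times>\<times> H)"
      using G H by (simp add: topological_group_def DirProd_group)
    show "topspace (prod_topology T U) = carrier (G \<times>\<times> H)"
      using G H by (simp add: topological_group_def)
    show "continuous_map (prod_topology (prod_topology T U) (prod_topology T U)) (prod_topology T U)
        (\<lambda>z. (fst (fst z) \<otimes>\<^bsub>G\<^esub> fst (snd z), snd (fst z) \<otimes>\<^bsub>H\<^esub> snd (snd z)))"
      using G H unfolding topological_group_def
      by (intro continuous_map_pairedI continuous_map_case_prod_comp[where h="(\<otimes>\<^bsub>G\<^esub>)"]
          continuous_map_case_prod_comp[where h="(\<otimes>\<^bsub>H\<^esub>)"]) (auto intro: continuous_map_double_projections)
    show "continuous_map (prod_topology T U) (prod_topology T U) (m_inv (G \<times>\<times> H))"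
      using G H by (intro continuous_map_eq[OF inv]) (auto simp: topological_group_def)
  qed
qed

lemma proper_actionI:
  assumes act: "continuous_action G T X act" and X: "Hausdorff_space X"
    and bounded: "\<And>K. compactin X K \<Longrightarrow> \<exists>C. compactin T C \<and> transporter G act K \<subseteq> C"
  shows "proper_action G T X act"
proof -
  have "compactin T (transporter G act K)" if K: "compactin X K" for K
  proof -
    obtain C where C: "compactin T C" "transporter G act K \<subseteq> C"
      using bounded K by blast
    define A where "A = {z \<in> topspace (prod_topology T X). (\<lambda>(g, x). act g x) z \<in> K}"
    have "closedin (prod_topology T X) A"
      unfolding A_def using act K X
      by (intro closedin_continuous_map_preimage compactin_imp_closedin)
        (auto simp: continuous_action_def)
    then have "compactin (prod_topology T X) (A \<inter> (C \<times> K))"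
      using C K by (intro closed_Int_compactin) (simp_all add: compactin_Times)
    then have "compactin T (fst ` (A \<inter> (C \<times> K)))"
      using continuous_map_fst by (rule image_compactin)
    moreover have "transporter G act K = fst ` (A \<inter> (C \<times> K))"
    proof
      have carrier: "topspace T = carrier G"
        using act by (simp add: continuous_action_def topological_group_def)
      show "fst ` (A \<inter> (C \<times> K)) \<subseteq> transporter G act K"
      proof
        fix g
        assume "g \<in> fst ` (A \<inter> (C \<times> K))"
        then obtain x where "(g, x) \<in> A" "x \<in> K"
          by force
        then have "g \<in> carrier G" "act g x \<in> act g ` K \<inter> K"
          using carrier unfolding A_def by auto
        then show "g \<in> transporter G act K"
          unfolding transporter_def by blast
      qed
      show "transporter G act K \<subseteq> fst ` (A \<inter> (C \<times> K))"
      proof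
        fix g
        assume g: "g \<in> transporter G act K"
        then obtain x where x: "x \<in> K" "act g x \<in> K" and "g \<in> carrier G"
          unfolding transporter_def by blast
        moreover have "x \<in> topspace X"
          using compactin_subset_topspace[OF K] x by blast
        ultimately have "(g, x) \<in> A \<inter> (C \<times> K)"
          using C g carrier unfolding A_def by auto
        then show "g \<in> fst ` (A \<inter> (C \<times> K))"
          by (rule rev_image_eqI) simp
      qed
    qed
    ultimately show ?thesis
      by simp
  qed
  with act show ?thesis
    by (simp add: proper_action_def transporter_def)
qed

lemma compactin_action_image:
  assumes "continuous_action G T X act" and "compactin T C" and "compactin X K"
  shows "compactin X ((\<lambda>(g, x). act g x) ` (C \<times> K))"
  using assms by (intro image_compactin[of "prod_topology T X"]) (simp_all add: compactin_Times continuous_action_def)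

lemma continuous_action_twisted_product:
  assumes act1: "continuous_action G1 T1 M1 act1"
    and act2: "continuous_action G2 T2 M2 act2"
    and act21: "continuous_action G2 T2 M1 act21"
    and commute: "\<forall>g1\<in>carrier G1. \<forall>g2\<in>carrier G2. \<forall>m\<in>topspace M1.
                    act1 g1 (act21 g2 m) = act21 g2 (act1 g1 m)"
  shows "continuous_action (G1 \<times>\<times> G2) (prod_topology T1 T2) (prod_topology M1 M2)
           (\<lambda>(g1, g2) (m1, m2). (act1 g1 (act21 g2 m1), act2 g2 m2))"
proof -
  define F where "F = (\<lambda>(g1, g2) (m1, m2). (act1 g1 (act21 g2 m1), act2 g2 m2))"
  have cont1: "continuous_map (prod_topology T1 M1) M1 (\<lambda>(g, m). act1 g m)"
    and cont2: "continuous_map (prod_topology T2 M2) M2 (\<lambda>(g, m). act2 g m)"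
    and cont21: "continuous_map (prod_topology T2 M1) M1 (\<lambda>(g, m). act21 g m)"
    using act1 act2 act21 by (simp_all add: continuous_action_def)
  have "continuous_map (prod_topology (prod_topology T1 T2) (prod_topology M1 M2)) (prod_topology M1 M2)
      (\<lambda>(g, m). F g m)"
    unfolding F_def case_prod_beta
    by (intro continuous_map_pairedI continuous_map_case_prod_comp[OF cont1]
        continuous_map_case_prod_comp[OF cont21] continuous_map_case_prod_comp[OF cont2]
        continuous_map_double_projections)
  moreover have "F (g \<otimes>\<^bsub>G1 \<times>\<times> G2\<^esub> h) m = F g (F h m)"
    if "g \<in> carrier (G1 \<times>\<times> G2)" "h \<in> carrier (G1 \<times>\<times> G2)" "m \<in> topspace (prod_topology M1 M2)"
    for g h m
  proof -
    obtain g1 g2 h1 h2 m1 m2 where pairs: "g = (g1, g2)" "h = (h1, h2)" "m = (m1, m2)"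
      by (metis prod.exhaust)
    have "act21 h2 m1 \<in> topspace M1"
      using act21 that pairs by (auto simp: continuous_action_def)
    with pairs show ?thesis
      using act1 act2 act21 commute that by (auto simp: F_def continuous_action_def)
  qed
  ultimately show ?thesis
    using act1 act2 act21 unfolding F_def[symmetric] continuous_action_def
    by (auto simp: F_def topological_group_DirProd)
qed

lemma transporter_twisted_product_subset:
  "transporter (G1 \<times>\<times> G2) (\<lambda>(g1, g2) (m1, m2). (act1 g1 (act21 g2 m1), act2 g2 m2)) K
     \<subseteq> transporter G1 act1 (fst ` K \<union> (\<lambda>(g, m). act21 g m) ` (transporter G2 act2 (snd ` K) \<times> fst ` K))
       \<times> transporter G2 act2 (snd ` K)"
    (is "_ \<subseteq> transporter G1 act1 (_ \<union> ?L) \<times> ?C2")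
proof
  fix g
  assume "g \<in> transporter (G1 \<times>\<times> G2) (\<lambda>(g1, g2) (m1, m2). (act1 g1 (act21 g2 m1), act2 g2 m2)) K"
  then obtain g1 g2 m1 m2 where g: "g = (g1, g2)" "g1 \<in> carrier G1" "g2 \<in> carrier G2"
    and m: "(m1, m2) \<in> K" "(act1 g1 (act21 g2 m1), act2 g2 m2) \<in> K"
    unfolding transporter_def by auto
  have "m1 \<in> fst ` K" "m2 \<in> snd ` K" "act1 g1 (act21 g2 m1) \<in> fst ` K" "act2 g2 m2 \<in> snd ` K"
    using m by (metis fst_conv snd_conv image_eqI)+
  then have "g2 \<in> ?C2"
    unfolding transporter_def using g by blast
  with \<open>m1 \<in> fst ` K\<close> have "act21 g2 m1 \<in> ?L"
    by (auto intro: rev_image_eqI[where x="(g2, m1)"])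
  then have "g1 \<in> transporter G1 act1 (fst ` K \<union> ?L)"
    unfolding transporter_def using g \<open>act1 g1 (act21 g2 m1) \<in> fst ` K\<close> by blast
  with \<open>g2 \<in> ?C2\<close> show "g \<in> transporter G1 act1 (fst ` K \<union> ?L) \<times> ?C2"
    using g by simp
qed

theorem lemma3p4:
  fixes G1 :: "'a monoid" and T1 :: "'a topology"
    and G2 :: "'b monoid" and T2 :: "'b topology"
    and M1 :: "'m topology" and M2 :: "'n topology"
    and act1 :: "'a \<Rightarrow> 'm \<Rightarrow> 'm" and act2 :: "'b \<Rightarrow> 'n \<Rightarrow> 'n"
    and act21 :: "'b \<Rightarrow> 'm \<Rightarrow> 'm"
  assumes "topological_group G1 T1" and "lc_space T1"
    and "topological_group G2 T2" and "lc_space T2"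
    and "lc_space M1" and "lc_space M2"
    and "proper_action G1 T1 M1 act1"
    and "proper_action G2 T2 M2 act2"
    and "continuous_action G2 T2 M1 act21"
    and commute: "\<forall>g1\<in>carrier G1. \<forall>g2\<in>carrier G2. \<forall>m\<in>topspace M1.
                    act1 g1 (act21 g2 m) = act21 g2 (act1 g1 m)"
  shows "proper_action (G1 \<times>\<times> G2) (prod_topology T1 T2) (prod_topology M1 M2)
           (\<lambda>(g1, g2) (m1, m2). (act1 g1 (act21 g2 m1), act2 g2 m2))"
proof -
  define F where "F = (\<lambda>(g1, g2) (m1, m2). (act1 g1 (act21 g2 m1), act2 g2 m2))"
  have "continuous_action (G1 \<times>\<times> G2) (prod_topology T1 T2) (prod_topology M1 M2) F"
    unfolding F_def using assms(7-9) commute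
    by (intro continuous_action_twisted_product) (simp_all add: proper_action_def)
  moreover have "Hausdorff_space (prod_topology M1 M2)"
    using assms(5,6) by (simp add: lc_space_def Hausdorff_space_prod_topology)
  moreover have "\<exists>C. compactin (prod_topology T1 T2) C \<and> transporter (G1 \<times>\<times> G2) F K \<subseteq> C"
    if K: "compactin (prod_topology M1 M2) K" for K
  proof -
    define C2 where "C2 = transporter G2 act2 (snd ` K)"
    define L where "L = (\<lambda>(g, m). act21 g m) ` (C2 \<times> fst ` K)"
    have K1: "compactin M1 (fst ` K)" and K2: "compactin M2 (snd ` K)"
      using K continuous_map_fst continuous_map_snd image_compactin by blast+
    have C2: "compactin T2 C2"
      unfolding C2_def using assms(8) K2 by (rule compactin_transporter)
    have "compactin T1 (transporter G1 act1 (fst ` K \<union> L))"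
      unfolding L_def using assms(7,9) K1 C2
      by (intro compactin_transporter compactin_Un compactin_action_image)
    moreover have "transporter (G1 \<times>\<times> G2) F K \<subseteq> transporter G1 act1 (fst ` K \<union> L) \<times> C2"
      unfolding F_def C2_def L_def by (rule transporter_twisted_product_subset)
    ultimately show ?thesis
      using C2 compactin_Times by blast
  qed
  ultimately show ?thesis
    unfolding F_def by (rule proper_actionI)
qed

end
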